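(* For every integer $n\ge 2$ there exist a finite alphabet $\Sigma_n$ and an $n$-state 1gQFA $Q_n$ over $\Sigma_n$ such that, taking strict cutpoint $1/2$, every one-way PFA $P$ over $\Sigma_n$ for which there is a strict cutpoint $\mu\in[0,1)$ with $L(P,\mu)=L(Q_n,1/2)$ has at least $n^2-1$ states.
   Context: Let $\Sigma$ be a finite alphabet and $\Sigma^\ast$ the set of finite words over it. Probabilistic computations are written with row vectors; stochastic matrices act on the right. A one-way PFA (probabilistic finite automaton, end-marker model) over $\Sigma$ is a tuple $P=(S,\Sigma,\pi,\{P_\sigma\}_{\sigma\in\Sigma},P_{\#},F)$, where $S$ is a finite state set (its number of states is $|S|$), $\pi$ is an initial probability distribution (row vector) on $S$, each $P_\sigma$ and $P_\#$ are row-stochastic $|S|\times|S|$ matrices, and $F\subseteq S$. For $w=\sigma_1\cdots\sigma_m$, $f_P(w)=\pi P_{\sigma_1}\cdots P_{\sigma_m}P_\#\mathbf 1_F$, where $\mathbf 1_F$ is the indicator column vector of $F$. For $\mu\in[0,1)$, $L(P,\mu)=\{w\in\Sigma^\ast: f_P(w)>\mu\}$. An $n$-state 1gQFA (measure-once one-way general quantum finite automaton) over $\Sigma$ is a tuple $Q=(\mathcal H,\Sigma,\rho_0,\{\mathcal E_\sigma\}_{\sigma\in\Sigma},P_{\mathrm{acc}})$ where $\mathcal H\cong\mathbb C^n$, $\rho_0$ is a density operator on $\mathcal H$, each $\mathcal E_\sigma$ is a completely positive trace-preserving map on the operators on $\mathcal H$, and $P_{\mathrm{acc}}$ is an orthogonal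 projector on $\mathcal H$. For $w=\sigma_1\cdots\sigma_m$, $\rho_w=\mathcal E_{\sigma_m}\circ\cdots\circ\mathcal E_{\sigma_1}(\rho_0)$ and $f_Q(w)=\operatorname{Tr}(P_{\mathrm{acc}}\rho_w)$. For $\lambda\in[0,1)$, $L(Q,\lambda)=\{w\in\Sigma^\ast: f_Q(w)>\lambda\}$. *)

theory Defs
  imports Complex_Main "Jordan_Normal_Form.Matrix"
begin

text \<open>States are indexed by {0..<k}; a distribution is a real vector of dimension k,
  treated as a row vector. Row-stochastic matrices act on the right.\<close>

definition prob_vec :: "nat \<Rightarrow> real vec \<Rightarrow> bool" where
  "prob_vec k v \<longleftrightarrow> v \<in> carrier_vec k \<and> (\<forall>i<k. 0 \<le> v $ i) \<and> (\<Sum>i<k. v $ i) = 1"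

definition row_stochastic :: "nat \<Rightarrow> real mat \<Rightarrow> bool" where
  "row_stochastic k M \<longleftrightarrow> M \<in> carrier_mat k k \<and>
     (\<forall>i<k. (\<forall>j<k. 0 \<le> M $$ (i,j)) \<and> (\<Sum>j<k. M $$ (i,j)) = 1)"

definition row_times :: "real vec \<Rightarrow> real mat \<Rightarrow> real vec" where
  "row_times v M = vec (dim_col M) (\<lambda>j. \<Sum>i<dim_vec v. v $ i * M $$ (i,j))"

definition is_pfa ::
  "nat set \<Rightarrow> nat \<Rightarrow> real vec \<Rightarrow> (nat \<Rightarrow> real mat) \<Rightarrow> real mat \<Rightarrow> nat set \<Rightarrow> bool" where
  "is_pfa \<Sigma> k \<pi> Ps Pend F \<longleftrightarrow> prob_vec k \<pi> \<and> (\<forall>\<sigma>\<in>\<Sigma>. row_stochastic k (Ps \<sigma>)) \<and>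
     row_stochastic k Pend \<and> F \<subseteq> {..<k}"

definition pfa_prob ::
  "real vec \<Rightarrow> (nat \<Rightarrow> real mat) \<Rightarrow> real mat \<Rightarrow> nat set \<Rightarrow> nat list \<Rightarrow> real" where
  "pfa_prob \<pi> Ps Pend F w =
     (let r = row_times (foldl (\<lambda>v \<sigma>. row_times v (Ps \<sigma>)) \<pi> w) Pend
      in \<Sum>i\<in>F. r $ i)"

definition pfa_lang ::
  "nat set \<Rightarrow> real vec \<Rightarrow> (nat \<Rightarrow> real mat) \<Rightarrow> real mat \<Rightarrow> nat set \<Rightarrow> real \<Rightarrow> nat list set" where
  "pfa_lang \<Sigma> \<pi> Ps Pend F \<mu> = {w \<in> lists \<Sigma>. pfa_prob \<pi> Ps Pend F w > \<mu>}"

definition mtrace :: "complex mat \<Rightarrow> complex" where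
  "mtrace A = (\<Sum>i<dim_row A. A $$ (i,i))"

definition adj :: "complex mat \<Rightarrow> complex mat" where
  "adj A = mat (dim_col A) (dim_row A) (\<lambda>(i,j). cnj (A $$ (j,i)))"

definition psd :: "nat \<Rightarrow> complex mat \<Rightarrow> bool" where
  "psd n A \<longleftrightarrow> A \<in> carrier_mat n n \<and> adj A = A \<and>
     (\<forall>v\<in>carrier_vec n. let q = (\<Sum>i<n. cnj (v $ i) * (A *\<^sub>v v) $ i) in Im q = 0 \<and> 0 \<le> Re q)"

definition density_op :: "nat \<Rightarrow> complex mat \<Rightarrow> bool" where
  "density_op n \<rho> \<longleftrightarrow> psd n \<rho> \<and> mtrace \<rho> = 1"

definition orth_projector :: "nat \<Rightarrow> complex mat \<Rightarrow> bool" where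
  "orth_projector n P \<longleftrightarrow> P \<in> carrier_mat n n \<and> P * P = P \<and> adj P = P"

definition linear_superop :: "nat \<Rightarrow> (complex mat \<Rightarrow> complex mat) \<Rightarrow> bool" where
  "linear_superop n E \<longleftrightarrow>
     (\<forall>A\<in>carrier_mat n n. E A \<in> carrier_mat n n) \<and>
     (\<forall>A\<in>carrier_mat n n. \<forall>B\<in>carrier_mat n n. E (A + B) = E A + E B) \<and>
     (\<forall>A\<in>carrier_mat n n. \<forall>c. E (c \<cdot>\<^sub>m A) = c \<cdot>\<^sub>m E A)"

text \<open>(id_k \<otimes> E) applied to a (k n) x (k n) matrix viewed as k x k array of n x n blocks.\<close>
definition ampliate :: "nat \<Rightarrow> nat \<Rightarrow> (complex mat \<Rightarrow> complex mat) \<Rightarrow> complex mat \<Rightarrow> complex mat" where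
  "ampliate k n E M = mat (k * n) (k * n) (\<lambda>(a,b).
     E (mat n n (\<lambda>(c,d). M $$ ((a div n) * n + c, (b div n) * n + d))) $$ (a mod n, b mod n))"

definition completely_positive :: "nat \<Rightarrow> (complex mat \<Rightarrow> complex mat) \<Rightarrow> bool" where
  "completely_positive n E \<longleftrightarrow>
     (\<forall>k\<ge>1. \<forall>M. psd (k * n) M \<longrightarrow> psd (k * n) (ampliate k n E M))"

definition trace_preserving :: "nat \<Rightarrow> (complex mat \<Rightarrow> complex mat) \<Rightarrow> bool" where
  "trace_preserving n E \<longleftrightarrow> (\<forall>A\<in>carrier_mat n n. mtrace (E A) = mtrace A)"

definition cptp :: "nat \<Rightarrow> (complex mat \<Rightarrow> complex mat) \<Rightarrow> bool" where
  "cptp n E \<longleftrightarrow> linear_superop n E \<and> completely_positive n E \<and> trace_preserving n E"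

definition is_1gqfa ::
  "nat set \<Rightarrow> nat \<Rightarrow> complex mat \<Rightarrow> (nat \<Rightarrow> complex mat \<Rightarrow> complex mat) \<Rightarrow> complex mat \<Rightarrow> bool" where
  "is_1gqfa \<Sigma> n \<rho>0 Es Pacc \<longleftrightarrow> density_op n \<rho>0 \<and> (\<forall>\<sigma>\<in>\<Sigma>. cptp n (Es \<sigma>)) \<and> orth_projector n Pacc"

definition qfa_prob ::
  "complex mat \<Rightarrow> (nat \<Rightarrow> complex mat \<Rightarrow> complex mat) \<Rightarrow> complex mat \<Rightarrow> nat list \<Rightarrow> real" where
  "qfa_prob \<rho>0 Es Pacc w = Re (mtrace (Pacc * foldl (\<lambda>\<rho> \<sigma>. Es \<sigma> \<rho>) \<rho>0 w))"

definition qfa_lang ::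
  "nat set \<Rightarrow> complex mat \<Rightarrow> (nat \<Rightarrow> complex mat \<Rightarrow> complex mat) \<Rightarrow> complex mat \<Rightarrow> real \<Rightarrow> nat list set" where
  "qfa_lang \<Sigma> \<rho>0 Es Pacc c = {w \<in> lists \<Sigma>. qfa_prob \<rho>0 Es Pacc w > c}"

end

theory Submission
  imports Defs "Jordan_Normal_Form.Determinant" "HOL-Library.Nat_Bijection"
begin

(*
  For p = j n + l < n^2 let the p-th probe state be the pure state of e_j (j = l), e_j + e_l
  (j < l) or e_l + i e_j (l < j).  These n^2 states are informationally complete: every real
  pattern g on them is realised as Tr(rho_p T) = g p by a Hermitian T.  The automaton Q_n has a
  letter preparing each probe state and, for every set I of probes, a letter measuring the effect
  1/2 + eps T_I, with T_I realising the sign pattern of I, and recording the outcome in e_0 or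
  e_1.  So Q_n accepts [p, I] exactly when p is in I.

  After its first letter a PFA with k < n^2 states is in one of n^2 affinely dependent
  distributions x_p: sum_p v_p x_p = 0 and sum_p v_p = 0 for some nonzero v.  As the acceptance
  probability f p of [p, I] is linear in x_p, sum_p v_p (f p - mu) = 0, whereas for
  I = {p. v_p > 0} a cutpoint mu reproducing the language of Q_n makes every term nonnegative and
  one term positive.
*)

section \<open>Matrices as functions of index pairs\<close>

abbreviation entries :: "'a mat \<Rightarrow> nat \<Rightarrow> nat \<Rightarrow> 'a" where
  "entries A \<equiv> \<lambda>i j. A $$ (i,j)"

definition trace_prod :: "nat \<Rightarrow> (nat \<Rightarrow> nat \<Rightarrow> complex) \<Rightarrow> (nat \<Rightarrow> nat \<Rightarrow> complex) \<Rightarrow> complex" where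
  "trace_prod n B K = (\<Sum>r<n. \<Sum>s<n. B r s * K s r)"

definition quad_form :: "nat \<Rightarrow> (nat \<Rightarrow> nat \<Rightarrow> complex) \<Rightarrow> (nat \<Rightarrow> complex) \<Rightarrow> complex" where
  "quad_form n B u = (\<Sum>r<n. \<Sum>s<n. cnj (u r) * B r s * u s)"

definition hermitian_on :: "nat \<Rightarrow> (nat \<Rightarrow> nat \<Rightarrow> complex) \<Rightarrow> bool" where
  "hermitian_on n B \<longleftrightarrow> (\<forall>r<n. \<forall>s<n. B s r = cnj (B r s))"

definition psd_on :: "nat \<Rightarrow> (nat \<Rightarrow> nat \<Rightarrow> complex) \<Rightarrow> bool" where
  "psd_on n B \<longleftrightarrow> hermitian_on n B \<and> (\<forall>u. 0 \<le> Re (quad_form n B u))"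

(* K \<ge> 0 expressed through the self-duality of the psd cone: in this form complete positivity
   of the channels below needs no square roots of positive matrices. *)
definition dual_psd :: "nat \<Rightarrow> (nat \<Rightarrow> nat \<Rightarrow> complex) \<Rightarrow> bool" where
  "dual_psd n K \<longleftrightarrow> hermitian_on n K \<and> (\<forall>B. psd_on n B \<longrightarrow> 0 \<le> Re (trace_prod n B K))"

lemma sum_lessThan_single:
  assumes "r < (n::nat)" "\<And>i. i \<noteq> r \<Longrightarrow> f i = 0"
  shows "(\<Sum>i<n. f i) = f r"
proof -
  have "(\<Sum>i<n. f i) = (\<Sum>i\<in>{r}. f i)"
    by (rule sum.mono_neutral_right) (use assms in auto)
  then show ?thesis by simp
qed

lemma sum_lessThan_pair:
  assumes "r \<noteq> s" "r < (n::nat)" "s < n" "\<And>i. i \<noteq> r \<Longrightarrow> i \<noteq> s \<Longrightarrow> f i = 0"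
  shows "(\<Sum>i<n. f i) = f r + f s"
proof -
  have "(\<Sum>i<n. f i) = (\<Sum>i\<in>{r,s}. f i)"
    by (rule sum.mono_neutral_right) (use assms in auto)
  then show ?thesis using assms by simp
qed

lemma block_index_less: "x < k \<Longrightarrow> i < (n::nat) \<Longrightarrow> x*n + i < k*n"
proof -
  assume "x < k" "i < n"
  then have "x*n + i < Suc x * n" by simp
  also have "\<dots> \<le> k * n" using \<open>x < k\<close> by (intro mult_right_mono) auto
  finally show ?thesis .
qed

lemma block_index_div_mod: "i < (n::nat) \<Longrightarrow> (x*n + i) div n = x \<and> (x*n + i) mod n = i"
  by auto

lemma sum_lessThan_blocks: "(\<Sum>a<k*n. (f::nat \<Rightarrow> 'a::comm_monoid_add) a) = (\<Sum>x<k. \<Sum>i<n. f (x*n + i))"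
proof -
  have "(\<Sum>a<k*n. f a) = (\<Sum>x<k. sum f {x*n..<x*n+n})"
    using sum.nat_group[of f n k] by simp
  also have "\<dots> = (\<Sum>x<k. \<Sum>i<n. f (x*n + i))"
  proof (rule sum.cong[OF refl])
    fix x
    show "sum f {x*n..<x*n+n} = (\<Sum>i<n. f (x*n + i))"
      using sum.shift_bounds_nat_ivl[of f 0 "x*n" n] by (simp add: atLeast0LessThan add.commute)
  qed
  finally show ?thesis .
qed

lemma quad_form_single:
  assumes "j < n" "\<And>i. i \<noteq> j \<Longrightarrow> u i = 0"
  shows "quad_form n B u = cnj (u j) * B j j * u j"
  unfolding quad_form_def
  by (subst sum_lessThan_single[OF assms(1)], simp add: assms(2),
      subst sum_lessThan_single[OF assms(1)], simp_all add: assms(2))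

lemma quad_form_pair:
  assumes "j \<noteq> l" "j < n" "l < n" "\<And>i. i \<noteq> j \<Longrightarrow> i \<noteq> l \<Longrightarrow> u i = 0"
  shows "quad_form n B u = cnj (u j) * B j j * u j + cnj (u j) * B j l * u l
     + cnj (u l) * B l j * u j + cnj (u l) * B l l * u l"
  unfolding quad_form_def
  by (subst sum_lessThan_pair[OF assms(1-3)], simp add: assms(4),
      (subst sum_lessThan_pair[OF assms(1-3)], simp_all add: assms(4))+)

lemma quad_form_diag: "quad_form n (\<lambda>r t. if r = t then c else 0) u = c * (\<Sum>r<n. cnj (u r) * u r)"
  unfolding quad_form_def sum_distrib_left
proof (intro sum.cong refl)
  fix r assume "r \<in> {..<n}"
  then show "(\<Sum>s<n. cnj (u r) * (if r = s then c else 0) * u s) = c * (cnj (u r) * u r)"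
    by (subst sum_lessThan_single[of r]) auto
qed

lemma quad_form_add: "quad_form n (\<lambda>r s. K1 r s + K2 r s) u = quad_form n K1 u + quad_form n K2 u"
  unfolding quad_form_def by (simp add: sum.distrib algebra_simps)

lemma quad_form_scale: "quad_form n (\<lambda>r s. c * K r s) u = c * quad_form n K u"
  unfolding quad_form_def by (simp add: sum_distrib_left mult_ac)

lemma hermitian_on_uminus: "hermitian_on n T \<Longrightarrow> hermitian_on n (\<lambda>r s. - T r s)"
  unfolding hermitian_on_def by (metis complex_cnj_minus)

lemma hermitian_quad_form_real:
  assumes "hermitian_on n B"
  shows "Im (quad_form n B u) = 0"
proof -
  have "cnj (quad_form n B u) = (\<Sum>r<n. \<Sum>s<n. u r * B s r * cnj (u s))"
    unfolding quad_form_def cnj_sum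
  proof (intro sum.cong refl)
    fix r s assume "r \<in> {..<n}" "s \<in> {..<n}"
    then have "B s r = cnj (B r s)" using assms unfolding hermitian_on_def by blast
    then show "cnj (cnj (u r) * B r s * u s) = u r * B s r * cnj (u s)" by simp
  qed
  also have "\<dots> = quad_form n B u"
    unfolding quad_form_def by (subst sum.swap) (simp add: mult_ac)
  finally show ?thesis by (metis Reals_cnj_iff complex_is_Real_iff)
qed

lemma psd_on_diag_nonneg:
  assumes "psd_on n B" "r < n"
  shows "0 \<le> Re (B r r)"
proof -
  have "quad_form n B (\<lambda>i. if i = r then 1 else 0) = B r r"
    by (subst quad_form_single[OF assms(2)]) auto
  then show ?thesis using assms(1) unfolding psd_on_def by metis
qed

lemma psd_on_offdiag_bound:
  assumes psd: "psd_on n B" and r: "r < n" and s: "s < n"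
  shows "cmod (B r s) \<le> (Re (B r r) + Re (B s s)) / 2"
proof (cases "r = s")
  case True
  have "Im (B r r) = 0"
    using psd r unfolding psd_on_def hermitian_on_def by (metis cnj.sel(2) neg_equal_zero)
  then have "cmod (B r r) = \<bar>Re (B r r)\<bar>" by (simp add: cmod_eq_Re)
  then show ?thesis using True psd_on_diag_nonneg[OF psd r] by simp
next
  case False
  show ?thesis
  proof (cases "B r s = 0")
    case True
    then show ?thesis using psd_on_diag_nonneg[OF psd r] psd_on_diag_nonneg[OF psd s] by simp
  next
    case nz: False
    \<comment> \<open>Test the form on e_r - z e_s, with the phase z chosen to make B r s z real and positive.\<close>
    define b where "b = B r s"
    define z where "z = cnj b / complex_of_real (cmod b)"
    define u where "u = (\<lambda>i. if i = r then 1 else if i = s then - z else (0::complex))"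
    have bsr: "B s r = cnj b" using psd r s unfolding psd_on_def hermitian_on_def b_def by blast
    have nb: "cmod b \<noteq> 0" using nz b_def by simp
    have "cmod z = 1" unfolding z_def norm_divide complex_mod_cnj norm_of_real using nb by simp
    then have zz: "cnj z * z = 1" using complex_norm_square[of z] by (simp add: mult.commute)
    have "b * cnj b = complex_of_real (cmod b) * complex_of_real (cmod b)"
      by (metis complex_norm_square of_real_mult power2_eq_square)
    then have bz: "b * z = complex_of_real (cmod b)"
      unfolding z_def times_divide_eq_right using nb by simp
    then have bz': "cnj z * cnj b = complex_of_real (cmod b)"
      by (metis complex_cnj_complex_of_real complex_cnj_mult mult.commute)
    have "quad_form n B u = B r r - b * z - cnj z * cnj b + (cnj z * z) * B s s"
      using False by (subst quad_form_pair[OF False r s]) (auto simp: u_def bsr b_def[symmetric] algebra_simps)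
    also have "\<dots> = B r r + B s s - 2 * complex_of_real (cmod b)"
      unfolding zz bz bz' by (simp add: algebra_simps)
    finally have "Re (quad_form n B u) = Re (B r r) + Re (B s s) - 2 * cmod b" by simp
    moreover have "0 \<le> Re (quad_form n B u)" using psd unfolding psd_on_def by blast
    ultimately show ?thesis by (simp add: b_def)
  qed
qed

lemma quad_form_eq_vec:
  assumes "A \<in> carrier_mat N N" "v \<in> carrier_vec N"
  shows "(\<Sum>a<N. cnj (v$a) * (A *\<^sub>v v)$a) = quad_form N (entries A) (\<lambda>a. v$a)"
  using assms
  by (auto simp: quad_form_def scalar_prod_def atLeast0LessThan sum_distrib_left mult.assoc intro!: sum.cong)

lemma psd_iff_psd_on: "psd N A \<longleftrightarrow> A \<in> carrier_mat N N \<and> psd_on N (entries A)"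
proof
  assume psd: "psd N A"
  then have A: "A \<in> carrier_mat N N" and "adj A = A" unfolding psd_def by auto
  then have "hermitian_on N (entries A)"
    unfolding hermitian_on_def by (metis (no_types, lifting) adj_def carrier_matD case_prod_conv index_mat(1))
  moreover have "0 \<le> Re (quad_form N (entries A) u)" for u
  proof -
    have "quad_form N (entries A) u = quad_form N (entries A) (\<lambda>a. vec N u $ a)"
      unfolding quad_form_def by (intro sum.cong refl) simp
    also have "\<dots> = (\<Sum>a<N. cnj (vec N u $ a) * (A *\<^sub>v vec N u) $ a)"
      by (rule quad_form_eq_vec[OF A, symmetric]) simp
    finally show ?thesis using psd unfolding psd_def Let_def by (metis vec_carrier)
  qed
  ultimately show "A \<in> carrier_mat N N \<and> psd_on N (entries A)" using A unfolding psd_on_def by blast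
next
  assume "A \<in> carrier_mat N N \<and> psd_on N (entries A)"
  then have A: "A \<in> carrier_mat N N" and psd: "psd_on N (entries A)" by auto
  have "adj A = A"
  proof (rule eq_matI)
    fix i j assume "i < dim_row A" "j < dim_col A"
    then have "i < N" "j < N" using A by auto
    then have "A $$ (i,j) = cnj (A $$ (j,i))" using psd unfolding psd_on_def hermitian_on_def by blast
    then show "adj A $$ (i,j) = A $$ (i,j)" using A \<open>i < N\<close> \<open>j < N\<close> by (simp add: adj_def)
  qed (use A in \<open>auto simp: adj_def\<close>)
  moreover have "Im q = 0 \<and> 0 \<le> Re q" if "v \<in> carrier_vec N" "q = (\<Sum>i<N. cnj (v$i) * (A *\<^sub>v v)$i)" for v q
    using that psd hermitian_quad_form_real quad_form_eq_vec[OF A] unfolding psd_on_def by metis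
  ultimately show "psd N A" using A unfolding psd_def Let_def by blast
qed

lemma psd_add:
  assumes "psd N A" "psd N B"
  shows "psd N (A + B)"
proof -
  have A: "A \<in> carrier_mat N N" and B: "B \<in> carrier_mat N N"
    and pA: "psd_on N (entries A)" and pB: "psd_on N (entries B)"
    using assms unfolding psd_iff_psd_on by auto
  have "hermitian_on N (entries (A + B))"
    unfolding hermitian_on_def
  proof (intro allI impI)
    fix r s assume "r < N" "s < N"
    then have "A $$ (s,r) = cnj (A $$ (r,s))" "B $$ (s,r) = cnj (B $$ (r,s))"
      using pA pB unfolding psd_on_def hermitian_on_def by blast+
    then show "(A + B) $$ (s,r) = cnj ((A + B) $$ (r,s))" using A B \<open>r < N\<close> \<open>s < N\<close> by simp
  qed
  moreover have "quad_form N (entries (A + B)) u = quad_form N (entries A) u + quad_form N (entries B) u" for u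
    unfolding quad_form_def sum.distrib[symmetric] using A B
    by (intro sum.cong refl) (auto simp: algebra_simps)
  ultimately have "psd_on N (entries (A + B))"
    using pA pB unfolding psd_on_def by simp
  then show ?thesis unfolding psd_iff_psd_on using A B by simp
qed

lemma trace_prod_cong:
  "(\<And>i j. i < n \<Longrightarrow> j < n \<Longrightarrow> B i j = B' i j) \<Longrightarrow> trace_prod n B K = trace_prod n B' K"
  unfolding trace_prod_def by (intro sum.cong refl) auto

lemma trace_prod_add: "trace_prod n B (\<lambda>r s. K1 r s + K2 r s) = trace_prod n B K1 + trace_prod n B K2"
  unfolding trace_prod_def by (simp add: sum.distrib distrib_left)

lemma trace_prod_scale: "trace_prod n B (\<lambda>r s. c * K r s) = c * trace_prod n B K"
  unfolding trace_prod_def by (simp add: sum_distrib_left mult_ac)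

lemma trace_prod_diag: "trace_prod n B (\<lambda>r s. if r = s then c else 0) = c * (\<Sum>r<n. B r r)"
  unfolding trace_prod_def sum_distrib_left
  by (intro sum.cong refl) (simp add: if_distrib mult.commute cong: if_cong)

lemma trace_prod_adjoint:
  assumes "hermitian_on n K"
  shows "cnj (trace_prod n B K) = trace_prod n (\<lambda>i j. cnj (B j i)) K"
proof -
  have "cnj (trace_prod n B K) = (\<Sum>r<n. \<Sum>s<n. cnj (B r s) * K r s)"
    unfolding trace_prod_def cnj_sum
  proof (intro sum.cong refl)
    fix r s assume "r \<in> {..<n}" "s \<in> {..<n}"
    then have "K r s = cnj (K s r)" using assms unfolding hermitian_on_def by blast
    then show "cnj (B r s * K s r) = cnj (B r s) * K r s" by simp
  qed
  also have "\<dots> = trace_prod n (\<lambda>i j. cnj (B j i)) K"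
    unfolding trace_prod_def by (rule sum.swap)
  finally show ?thesis .
qed

lemma trace_prod_rank_one: "trace_prod n (\<lambda>i j. a * w i * cnj (w j)) K = a * quad_form n K w"
  unfolding trace_prod_def quad_form_def sum_distrib_left by (subst sum.swap) (simp add: mult_ac)

lemma mtrace_eq_trace_prod:
  "A \<in> carrier_mat n n \<Longrightarrow> mtrace A = trace_prod n (entries A) (\<lambda>r s. if r = s then 1 else 0)"
  unfolding mtrace_def trace_prod_diag by simp

lemma dual_psd_scaled_id:
  assumes "0 \<le> c"
  shows "dual_psd n (\<lambda>r s. if r = s then complex_of_real c else 0)"
  unfolding dual_psd_def
proof (intro conjI allI impI)
  show "hermitian_on n (\<lambda>r s. if r = s then complex_of_real c else 0)"
    unfolding hermitian_on_def by simp
  fix B assume "psd_on n B"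
  then have "0 \<le> (\<Sum>r<n. Re (B r r))" using psd_on_diag_nonneg by (intro sum_nonneg) auto
  then show "0 \<le> Re (trace_prod n B (\<lambda>r s. if r = s then complex_of_real c else 0))"
    using assms unfolding trace_prod_diag by (simp add: Re_sum)
qed

lemma dual_psd_half_id_perturbed:
  assumes herm: "hermitian_on n T" and bound: "\<And>r s. r < n \<Longrightarrow> s < n \<Longrightarrow> cmod (T r s) \<le> \<beta>"
    and e: "0 \<le> e" "2 * e * \<beta> * real n \<le> 1"
  shows "dual_psd n (\<lambda>r s. (if r = s then 1/2 else 0) + complex_of_real e * T r s)"
  unfolding dual_psd_def
proof (intro conjI allI impI)
  show "hermitian_on n (\<lambda>r s. (if r = s then 1/2 else 0) + complex_of_real e * T r s)"
    unfolding hermitian_on_def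
  proof (intro allI impI)
    fix r s assume "r < n" "s < n"
    then have "T s r = cnj (T r s)" using herm unfolding hermitian_on_def by blast
    then show "(if s = r then 1/2 else 0) + complex_of_real e * T s r
        = cnj ((if r = s then 1/2 else 0) + complex_of_real e * T r s)" by simp
  qed
next
  fix B assume psd: "psd_on n B"
  define S where "S = (\<Sum>r<n. Re (B r r))"
  have S: "0 \<le> S" unfolding S_def using psd_on_diag_nonneg[OF psd] by (intro sum_nonneg) auto
  \<comment> \<open>A psd matrix is dominated by its diagonal, so the perturbation moves the trace by at most e \<beta> n S.\<close>
  have "cmod (trace_prod n B T) \<le> (\<Sum>r<n. \<Sum>s<n. cmod (B r s) * cmod (T s r))"
    unfolding trace_prod_def by (intro order_trans[OF norm_sum] sum_mono) (simp add: norm_sum norm_mult)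
  also have "\<dots> \<le> (\<Sum>r<n. \<Sum>s<n. (Re (B r r) + Re (B s s)) / 2 * \<beta>)"
    by (intro sum_mono mult_mono psd_on_offdiag_bound[OF psd] bound)
      (auto intro!: add_nonneg_nonneg psd_on_diag_nonneg[OF psd])
  also have "\<dots> = \<beta> * real n * S"
    unfolding S_def
    by (simp add: sum.distrib sum_divide_distrib[symmetric] sum_distrib_left[symmetric]
        sum_distrib_right[symmetric] algebra_simps)
  finally have "- (\<beta> * real n * S) \<le> Re (trace_prod n B T)"
    using abs_Re_le_cmod[of "trace_prod n B T"] by linarith
  then have "- (e * (\<beta> * real n * S)) \<le> e * Re (trace_prod n B T)"
    using e(1) by (metis mult_left_mono mult_minus_right)
  moreover have "e * (\<beta> * real n * S) \<le> S / 2"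
    using mult_right_mono[OF e(2) S] by (simp add: algebra_simps)
  moreover have "Re (trace_prod n B (\<lambda>r s. (if r = s then 1/2 else 0) + complex_of_real e * T r s))
      = S / 2 + e * Re (trace_prod n B T)"
    unfolding trace_prod_add trace_prod_diag trace_prod_scale S_def by (simp add: Re_sum)
  ultimately show "0 \<le> Re (trace_prod n B (\<lambda>r s. (if r = s then 1/2 else 0) + complex_of_real e * T r s))"
    by linarith
qed

section \<open>Measure-and-prepare channels\<close>

definition meas_prep ::
  "nat \<Rightarrow> (nat \<Rightarrow> nat \<Rightarrow> complex) \<Rightarrow> (nat \<Rightarrow> complex) \<Rightarrow> complex mat \<Rightarrow> complex mat" where
  "meas_prep n K w A = mat n n (\<lambda>(r,s). trace_prod n (entries A) K * w r * cnj (w s))"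

definition mat_block :: "'a mat \<Rightarrow> nat \<Rightarrow> nat \<Rightarrow> nat \<Rightarrow> nat \<Rightarrow> nat \<Rightarrow> 'a" where
  "mat_block M n x y i j = M $$ (x*n + i, y*n + j)"

(* (C\<^sup>* \<otimes> 1) M (C \<otimes> 1) for M read as a k x k array of n x n blocks. *)
definition block_compression ::
  "nat \<Rightarrow> nat \<Rightarrow> complex mat \<Rightarrow> (nat \<Rightarrow> complex) \<Rightarrow> nat \<Rightarrow> nat \<Rightarrow> complex" where
  "block_compression k n M C i j = (\<Sum>x<k. \<Sum>y<k. cnj (C x) * C y * mat_block M n x y i j)"

lemma psd_on_block_compression:
  assumes "psd (k*n) M"
  shows "psd_on n (block_compression k n M C)"
proof -
  have herm: "hermitian_on (k*n) (entries M)" and pos: "\<And>u. 0 \<le> Re (quad_form (k*n) (entries M) u)"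
    using assms unfolding psd_iff_psd_on psd_on_def by auto
  have "hermitian_on n (block_compression k n M C)"
    unfolding hermitian_on_def
  proof (intro allI impI)
    fix i j assume i: "i < n" and j: "j < n"
    have "cnj (block_compression k n M C i j) = (\<Sum>x<k. \<Sum>y<k. C x * cnj (C y) * mat_block M n y x j i)"
      unfolding block_compression_def cnj_sum
    proof (intro sum.cong refl)
      fix x y assume "x \<in> {..<k}" "y \<in> {..<k}"
      then have "x*n + i < k*n" "y*n + j < k*n" using block_index_less i j by auto
      then have "M $$ (y*n + j, x*n + i) = cnj (M $$ (x*n + i, y*n + j))"
        using herm unfolding hermitian_on_def by blast
      then show "cnj (cnj (C x) * C y * mat_block M n x y i j) = C x * cnj (C y) * mat_block M n y x j i"
        by (simp add: mat_block_def)
    qed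
    also have "\<dots> = block_compression k n M C j i"
      unfolding block_compression_def by (subst sum.swap) (simp add: mult_ac)
    finally show "block_compression k n M C j i = cnj (block_compression k n M C i j)" by simp
  qed
  moreover have "quad_form n (block_compression k n M C) u
      = quad_form (k*n) (entries M) (\<lambda>a. C (a div n) * u (a mod n))" for u
  proof -
    have "quad_form (k*n) (entries M) (\<lambda>a. C (a div n) * u (a mod n))
        = (\<Sum>x<k. \<Sum>i<n. \<Sum>y<k. \<Sum>j<n. cnj (C x * u i) * mat_block M n x y i j * (C y * u j))"
      unfolding quad_form_def sum_lessThan_blocks
      by (intro sum.cong refl) (simp add: block_index_div_mod mat_block_def)
    also have "\<dots> = (\<Sum>i<n. \<Sum>j<n. \<Sum>x<k. \<Sum>y<k. cnj (C x * u i) * mat_block M n x y i j * (C y * u j))"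
      by (simp only: sum.swap[of _ "{..<k}" "{..<n}"])
    also have "\<dots> = quad_form n (block_compression k n M C) u"
      unfolding quad_form_def block_compression_def sum_distrib_left sum_distrib_right
      by (intro sum.cong refl) (simp add: mult_ac)
    finally show ?thesis by simp
  qed
  ultimately show ?thesis unfolding psd_on_def using pos by simp
qed

lemma ampliate_meas_prep_entry:
  assumes "a < k*n" "b < k*n"
  shows "ampliate k n (meas_prep n K w) M $$ (a,b)
    = trace_prod n (mat_block M n (a div n) (b div n)) K * w (a mod n) * cnj (w (b mod n))"
proof -
  have "0 < n" using assms by (cases n) auto
  then have "a mod n < n" "b mod n < n" by auto
  moreover have "trace_prod n (entries (mat n n (\<lambda>(c,d). M $$ ((a div n)*n + c, (b div n)*n + d)))) K
      = trace_prod n (mat_block M n (a div n) (b div n)) K"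
    by (rule trace_prod_cong) (simp add: mat_block_def)
  ultimately show ?thesis
    unfolding ampliate_def meas_prep_def using assms by simp
qed

lemma hermitian_ampliate_meas_prep:
  assumes M: "psd (k*n) M" and K: "hermitian_on n K"
  shows "hermitian_on (k*n) (entries (ampliate k n (meas_prep n K w) M))"
  unfolding hermitian_on_def
proof (intro allI impI)
  fix a b assume a: "a < k*n" and b: "b < k*n"
  have herm: "hermitian_on (k*n) (entries M)" using M unfolding psd_iff_psd_on psd_on_def by auto
  have blocks: "a div n < k" "b div n < k" using a b by (auto simp: less_mult_imp_div_less)
  have "cnj (trace_prod n (mat_block M n (a div n) (b div n)) K)
      = trace_prod n (mat_block M n (b div n) (a div n)) K"
    unfolding trace_prod_adjoint[OF K]
  proof (rule trace_prod_cong)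
    fix i j assume "i < n" "j < n"
    then have "(a div n)*n + j < k*n" "(b div n)*n + i < k*n" using blocks block_index_less by auto
    then have "M $$ ((b div n)*n + i, (a div n)*n + j) = cnj (M $$ ((a div n)*n + j, (b div n)*n + i))"
      using herm unfolding hermitian_on_def by blast
    then show "cnj (mat_block M n (a div n) (b div n) j i) = mat_block M n (b div n) (a div n) i j"
      by (simp add: mat_block_def)
  qed
  then show "ampliate k n (meas_prep n K w) M $$ (b,a) = cnj (ampliate k n (meas_prep n K w) M $$ (a,b))"
    unfolding ampliate_meas_prep_entry[OF a b] ampliate_meas_prep_entry[OF b a] by simp
qed

lemma quad_form_ampliate_meas_prep:
  "quad_form (k*n) (entries (ampliate k n (meas_prep n K w) M)) v
    = trace_prod n (block_compression k n M (\<lambda>x. \<Sum>t<n. cnj (w t) * v (x*n + t))) K"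
proof -
  define C where "C x = (\<Sum>t<n. cnj (w t) * v (x*n + t))" for x
  have "quad_form (k*n) (entries (ampliate k n (meas_prep n K w) M)) v
      = (\<Sum>x<k. \<Sum>r<n. \<Sum>y<k. \<Sum>t<n.
           cnj (v (x*n + r)) * (trace_prod n (mat_block M n x y) K * w r * cnj (w t)) * v (y*n + t))"
    unfolding quad_form_def sum_lessThan_blocks
    by (intro sum.cong refl) (simp add: ampliate_meas_prep_entry block_index_less block_index_div_mod)
  also have "\<dots> = (\<Sum>x<k. \<Sum>y<k. \<Sum>r<n. \<Sum>t<n.
           cnj (v (x*n + r)) * (trace_prod n (mat_block M n x y) K * w r * cnj (w t)) * v (y*n + t))"
    by (simp only: sum.swap[of _ "{..<n}" "{..<k}"])
  also have "\<dots> = (\<Sum>x<k. \<Sum>y<k. cnj (C x) * C y * trace_prod n (mat_block M n x y) K)"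
  proof (intro sum.cong refl)
    fix x y
    show "(\<Sum>r<n. \<Sum>t<n. cnj (v (x*n + r)) * (trace_prod n (mat_block M n x y) K * w r * cnj (w t))
          * v (y*n + t)) = cnj (C x) * C y * trace_prod n (mat_block M n x y) K"
      unfolding C_def cnj_sum sum_distrib_right
      by (intro sum.cong refl) (simp add: sum_distrib_left mult_ac)
  qed
  also have "\<dots> = trace_prod n (block_compression k n M C) K"
    unfolding trace_prod_def block_compression_def sum_distrib_left sum_distrib_right
    by (simp only: sum.swap[of _ "{..<n}" "{..<k}"], intro sum.cong refl, simp add: mult_ac)
  finally show ?thesis unfolding C_def .
qed

lemma completely_positive_meas_prep:
  assumes "dual_psd n K"
  shows "completely_positive n (meas_prep n K w)"
  unfolding completely_positive_def
proof (intro allI impI)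
  fix k M assume M: "psd (k*n) M"
  have "psd_on (k*n) (entries (ampliate k n (meas_prep n K w) M))"
    unfolding psd_on_def quad_form_ampliate_meas_prep
    using hermitian_ampliate_meas_prep[OF M] psd_on_block_compression[OF M] assms
    unfolding dual_psd_def by blast
  then show "psd (k*n) (ampliate k n (meas_prep n K w) M)"
    unfolding psd_iff_psd_on by (simp add: ampliate_def)
qed

lemma linear_superop_meas_prep: "linear_superop n (meas_prep n K w)"
  unfolding linear_superop_def
proof (intro conjI ballI allI)
  fix A :: "complex mat"
  show "meas_prep n K w A \<in> carrier_mat n n" unfolding meas_prep_def by simp
next
  fix A B :: "complex mat" assume A: "A \<in> carrier_mat n n" and B: "B \<in> carrier_mat n n"
  have "trace_prod n (entries (A + B)) K = trace_prod n (entries A) K + trace_prod n (entries B) K"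
    unfolding trace_prod_def sum.distrib[symmetric] using A B
    by (intro sum.cong refl) (auto simp: distrib_right)
  then show "meas_prep n K w (A + B) = meas_prep n K w A + meas_prep n K w B"
    unfolding meas_prep_def by (intro eq_matI) (auto simp: distrib_right)
next
  fix A :: "complex mat" and c :: complex assume A: "A \<in> carrier_mat n n"
  have "trace_prod n (entries (c \<cdot>\<^sub>m A)) K = c * trace_prod n (entries A) K"
    unfolding trace_prod_def sum_distrib_left using A
    by (intro sum.cong refl) (auto simp: mult.assoc)
  then show "meas_prep n K w (c \<cdot>\<^sub>m A) = c \<cdot>\<^sub>m meas_prep n K w A"
    unfolding meas_prep_def by (intro eq_matI) (auto simp: mult.assoc)
qed

lemma mtrace_meas_prep:
  "mtrace (meas_prep n K w A) = trace_prod n (entries A) K * (\<Sum>r<n. w r * cnj (w r))"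
  unfolding mtrace_def meas_prep_def by (simp add: sum_distrib_left mult.assoc)

lemma linear_superop_add:
  assumes "linear_superop n E1" "linear_superop n E2"
  shows "linear_superop n (\<lambda>A. E1 A + E2 A)"
  unfolding linear_superop_def
proof (intro conjI ballI allI)
  fix A :: "complex mat" assume "A \<in> carrier_mat n n"
  then show "E1 A + E2 A \<in> carrier_mat n n" using assms unfolding linear_superop_def by simp
next
  fix A B :: "complex mat" assume A: "A \<in> carrier_mat n n" and B: "B \<in> carrier_mat n n"
  then have "E1 A \<in> carrier_mat n n" "E1 B \<in> carrier_mat n n" "E2 A \<in> carrier_mat n n" "E2 B \<in> carrier_mat n n"
    and "E1 (A + B) = E1 A + E1 B" "E2 (A + B) = E2 A + E2 B"
    using assms unfolding linear_superop_def by auto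
  then show "E1 (A + B) + E2 (A + B) = E1 A + E2 A + (E1 B + E2 B)"
    by (intro eq_matI) auto
next
  fix A :: "complex mat" and c :: complex assume A: "A \<in> carrier_mat n n"
  then have "E1 A \<in> carrier_mat n n" "E2 A \<in> carrier_mat n n"
    and "E1 (c \<cdot>\<^sub>m A) = c \<cdot>\<^sub>m E1 A" "E2 (c \<cdot>\<^sub>m A) = c \<cdot>\<^sub>m E2 A"
    using assms unfolding linear_superop_def by auto
  then show "E1 (c \<cdot>\<^sub>m A) + E2 (c \<cdot>\<^sub>m A) = c \<cdot>\<^sub>m (E1 A + E2 A)"
    by (intro eq_matI) (auto simp: distrib_left)
qed

lemma completely_positive_add:
  assumes cp: "completely_positive n E1" "completely_positive n E2"
    and car: "\<And>A. E1 A \<in> carrier_mat n n" "\<And>A. E2 A \<in> carrier_mat n n"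
  shows "completely_positive n (\<lambda>A. E1 A + E2 A)"
  unfolding completely_positive_def
proof (intro allI impI)
  fix k M assume "1 \<le> k" and M: "psd (k*n) M"
  have "ampliate k n (\<lambda>A. E1 A + E2 A) M = ampliate k n E1 M + ampliate k n E2 M"
  proof (rule eq_matI)
    fix a b assume "a < dim_row (ampliate k n E1 M + ampliate k n E2 M)"
      "b < dim_col (ampliate k n E1 M + ampliate k n E2 M)"
    then have ab: "a < k*n" "b < k*n" by (auto simp: ampliate_def)
    then have "0 < n" by (cases n) auto
    then show "ampliate k n (\<lambda>A. E1 A + E2 A) M $$ (a,b) = (ampliate k n E1 M + ampliate k n E2 M) $$ (a,b)"
      using ab by (simp add: ampliate_def carrier_matD[OF car(1)] carrier_matD[OF car(2)])
  qed (auto simp: ampliate_def)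
  then show "psd (k*n) (ampliate k n (\<lambda>A. E1 A + E2 A) M)"
    using psd_add cp \<open>1 \<le> k\<close> M unfolding completely_positive_def by metis
qed

lemma cptp_prepare:
  assumes "0 \<le> c" and norm: "complex_of_real c * (\<Sum>r<n. w r * cnj (w r)) = 1"
  shows "cptp n (meas_prep n (\<lambda>r s. if r = s then complex_of_real c else 0) w)"
  unfolding cptp_def trace_preserving_def
proof (intro conjI ballI linear_superop_meas_prep completely_positive_meas_prep dual_psd_scaled_id assms(1))
  fix A :: "complex mat" assume "A \<in> carrier_mat n n"
  then have "mtrace A = (\<Sum>r<n. A $$ (r,r))" unfolding mtrace_def by simp
  then show "mtrace (meas_prep n (\<lambda>r s. if r = s then complex_of_real c else 0) w A) = mtrace A"
    unfolding mtrace_meas_prep trace_prod_diag using norm by (simp add: mult_ac)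
qed

lemma cptp_two_outcome:
  assumes "dual_psd n K0" "dual_psd n K1"
    and complete: "\<And>r s. K0 r s + K1 r s = (if r = s then 1 else 0)"
    and "(\<Sum>r<n. w0 r * cnj (w0 r)) = 1" "(\<Sum>r<n. w1 r * cnj (w1 r)) = 1"
  shows "cptp n (\<lambda>A. meas_prep n K0 w0 A + meas_prep n K1 w1 A)"
  unfolding cptp_def trace_preserving_def
proof (intro conjI ballI linear_superop_add linear_superop_meas_prep completely_positive_add
    completely_positive_meas_prep assms(1,2))
  fix A :: "complex mat" assume A: "A \<in> carrier_mat n n"
  have "mtrace (meas_prep n K0 w0 A + meas_prep n K1 w1 A)
      = mtrace (meas_prep n K0 w0 A) + mtrace (meas_prep n K1 w1 A)"
    unfolding mtrace_def meas_prep_def by (simp add: sum.distrib)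
  also have "\<dots> = trace_prod n (entries A) (\<lambda>r s. K0 r s + K1 r s)"
    unfolding mtrace_meas_prep trace_prod_add using assms(4,5) by simp
  also have "\<dots> = mtrace A"
    unfolding complete mtrace_eq_trace_prod[OF A] ..
  finally show "mtrace (meas_prep n K0 w0 A + meas_prep n K1 w1 A) = mtrace A" .
qed (auto simp: meas_prep_def)

section \<open>Probe states\<close>

definition probe_vec :: "nat \<Rightarrow> nat \<Rightarrow> nat \<Rightarrow> complex" where
  "probe_vec n p r =
     (if p div n = p mod n then (if r = p div n then 1 else 0)
      else if p div n < p mod n then (if r = p div n \<or> r = p mod n then 1 else 0)
      else if r = p mod n then 1 else if r = p div n then \<i> else 0)"

definition probe_weight :: "nat \<Rightarrow> nat \<Rightarrow> real" where
  "probe_weight n p = (if p div n = p mod n then 1 else 1/2)"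

definition probe_interpolant :: "nat \<Rightarrow> (nat \<Rightarrow> real) \<Rightarrow> nat \<Rightarrow> nat \<Rightarrow> complex" where
  "probe_interpolant n g r t =
     (let d = (\<lambda>q. g q - (g (r*n + r) + g (t*n + t)) / 2) in
      if r = t then complex_of_real (g (r*n + r))
      else if r < t then Complex (d (r*n + t)) (- d (t*n + r))
      else Complex (d (t*n + r)) (d (r*n + t)))"

lemma hermitian_probe_interpolant: "hermitian_on n (probe_interpolant n g)"
  unfolding hermitian_on_def probe_interpolant_def Let_def
  by (auto simp: complex_eq_iff algebra_simps)

lemma probe_interpolant_bound:
  assumes "\<And>q. \<bar>g q\<bar> \<le> 1"
  shows "cmod (probe_interpolant n g r t) \<le> 4"
proof -
  have d: "\<bar>g q - (g a + g b) / 2\<bar> \<le> 2" "\<bar>(g a + g b) / 2 - g q\<bar> \<le> 2" for q a b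
    using assms[of q] assms[of a] assms[of b] by (auto simp: abs_le_iff field_simps)
  show ?thesis
  proof (cases "r = t")
    case True
    then show ?thesis using assms[of "r*n + r"] by (simp add: probe_interpolant_def)
  next
    case False
    then have "\<bar>Re (probe_interpolant n g r t)\<bar> \<le> 2" "\<bar>Im (probe_interpolant n g r t)\<bar> \<le> 2"
      using d by (auto simp: probe_interpolant_def Let_def)
    then show ?thesis using cmod_le[of "probe_interpolant n g r t"] by linarith
  qed
qed

lemma probe_interpolant_expectation:
  assumes p: "p < n*n"
  shows "complex_of_real (probe_weight n p) * quad_form n (probe_interpolant n g) (probe_vec n p)
    = complex_of_real (g p)"
proof -
  define j where "j = p div n"
  define l where "l = p mod n"
  have "0 < n" using p by (cases n) auto
  then have j: "j < n" and l: "l < n" and gp: "g p = g (j*n + l)"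
    using p unfolding j_def l_def by (auto simp: less_mult_imp_div_less)
  note defs = probe_vec_def probe_weight_def j_def[symmetric] l_def[symmetric]
  consider "j = l" | "j < l" | "l < j" by linarith
  then show ?thesis
  proof cases
    case 1
    then have "quad_form n (probe_interpolant n g) (probe_vec n p) = probe_interpolant n g j j"
      by (subst quad_form_single[OF j]) (auto simp: defs)
    then show ?thesis using 1 by (simp add: defs probe_interpolant_def gp)
  next
    case 2
    then have "quad_form n (probe_interpolant n g) (probe_vec n p)
        = probe_interpolant n g j j + probe_interpolant n g j l
          + probe_interpolant n g l j + probe_interpolant n g l l"
      by (subst quad_form_pair[OF _ j l]) (auto simp: defs)
    then show ?thesis
      using 2 by (simp add: defs probe_interpolant_def Let_def gp complex_eq_iff field_simps)
  next
    case 3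
    then have "quad_form n (probe_interpolant n g) (probe_vec n p)
        = probe_interpolant n g l l + \<i> * probe_interpolant n g l j
          - \<i> * probe_interpolant n g j l + probe_interpolant n g j j"
      by (subst quad_form_pair[OF _ l j]) (auto simp: defs algebra_simps)
    then show ?thesis
      using 3 by (simp add: defs probe_interpolant_def Let_def gp complex_eq_iff field_simps)
  qed
qed

lemma probe_interpolant_one: "probe_interpolant n (\<lambda>_. 1) = (\<lambda>r t. if r = t then 1 else 0)"
  by (intro ext) (simp add: probe_interpolant_def Let_def complex_eq_iff)

lemma probe_vec_normalized:
  assumes "p < n*n"
  shows "complex_of_real (probe_weight n p) * (\<Sum>r<n. probe_vec n p r * cnj (probe_vec n p r)) = 1"
  using probe_interpolant_expectation[OF assms, of "\<lambda>_. 1"]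
  unfolding probe_interpolant_one quad_form_diag by (simp add: mult.commute)

section \<open>The quantum automaton\<close>

definition ket0_proj :: "nat \<Rightarrow> complex mat" where
  "ket0_proj n = mat n n (\<lambda>(i,j). if i = 0 \<and> j = 0 then 1 else 0)"

lemma ket0_proj_carrier: "ket0_proj n \<in> carrier_mat n n"
  unfolding ket0_proj_def by simp

lemma adj_ket0_proj: "adj (ket0_proj n) = ket0_proj n"
  by (rule eq_matI) (auto simp: adj_def ket0_proj_def)

lemma mtrace_ket0_proj_mult:
  assumes Z: "Z \<in> carrier_mat n n" and n: "0 < n"
  shows "mtrace (ket0_proj n * Z) = Z $$ (0,0)"
proof -
  have "mtrace (ket0_proj n * Z) = (\<Sum>i<n. \<Sum>k<n. (if i = 0 \<and> k = 0 then 1 else 0) * Z $$ (k,i))"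
    unfolding mtrace_def using Z
    by (intro sum.cong) (auto simp: ket0_proj_def scalar_prod_def atLeast0LessThan)
  also have "\<dots> = Z $$ (0,0)"
    by (subst sum_lessThan_single[OF n]) (auto intro!: sum.neutral, subst sum_lessThan_single[OF n], auto)
  finally show ?thesis .
qed

lemma density_op_ket0_proj:
  assumes n: "0 < n"
  shows "density_op n (ket0_proj n)"
proof -
  have "quad_form n (entries (ket0_proj n)) u = cnj (u 0) * u 0" for u
  proof -
    have "quad_form n (entries (ket0_proj n)) u
        = (\<Sum>r<n. \<Sum>s<n. cnj (u r) * (if r = 0 \<and> s = 0 then 1 else 0) * u s)"
      unfolding quad_form_def by (intro sum.cong refl) (simp add: ket0_proj_def)
    also have "\<dots> = cnj (u 0) * u 0"
      by (subst sum_lessThan_single[OF n]) (auto intro!: sum.neutral, subst sum_lessThan_single[OF n], auto)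
    finally show ?thesis .
  qed
  moreover have "hermitian_on n (entries (ket0_proj n))"
    unfolding hermitian_on_def ket0_proj_def by simp
  ultimately have "psd_on n (entries (ket0_proj n))"
    unfolding psd_on_def by (simp add: mult.commute)
  moreover have "mtrace (ket0_proj n) = 1"
    unfolding mtrace_def ket0_proj_def using n by simp
  ultimately show ?thesis
    unfolding density_op_def psd_iff_psd_on using ket0_proj_carrier by blast
qed

lemma orth_projector_ket0_proj: "orth_projector n (ket0_proj n)"
  unfolding orth_projector_def
proof (intro conjI ket0_proj_carrier adj_ket0_proj)
  show "ket0_proj n * ket0_proj n = ket0_proj n"
  proof (rule eq_matI)
    fix i j assume "i < dim_row (ket0_proj n)" "j < dim_col (ket0_proj n)"
    then have i: "i < n" and j: "j < n" by (auto simp: ket0_proj_def)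
    have "(ket0_proj n * ket0_proj n) $$ (i,j)
        = (\<Sum>k<n. (if i = 0 \<and> k = 0 then 1 else 0) * (if k = 0 \<and> j = 0 then 1 else 0))"
      using i j by (auto simp: ket0_proj_def scalar_prod_def atLeast0LessThan intro!: sum.cong)
    also have "\<dots> = (if i = 0 \<and> j = 0 then 1 else 0)"
      using i by (subst sum_lessThan_single[of 0]) auto
    finally show "(ket0_proj n * ket0_proj n) $$ (i,j) = ket0_proj n $$ (i,j)"
      using i j by (simp add: ket0_proj_def)
  qed (auto simp: ket0_proj_def)
qed

definition unit_fun :: "nat \<Rightarrow> nat \<Rightarrow> complex" where
  "unit_fun i r = (if r = i then 1 else 0)"

lemma unit_fun_normalized: "i < n \<Longrightarrow> (\<Sum>r<n. unit_fun i r * cnj (unit_fun i r)) = 1"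
  unfolding unit_fun_def by (subst sum_lessThan_single[of i]) auto

definition sign_pattern :: "nat set \<Rightarrow> nat \<Rightarrow> real" where
  "sign_pattern I p = (if p \<in> I then 1 else -1)"

definition qfa_eps :: "nat \<Rightarrow> real" where
  "qfa_eps n = 1 / (8 * real n)"

definition qfa_alphabet :: "nat \<Rightarrow> nat set" where
  "qfa_alphabet n = {..<n*n} \<union> (\<lambda>I. n*n + set_encode I) ` Pow {..<n*n}"

(* Letter p < n^2 prepares the p-th probe state; letter n^2 + set_encode I is the test for I. *)
definition qfa_channel :: "nat \<Rightarrow> nat \<Rightarrow> complex mat \<Rightarrow> complex mat" where
  "qfa_channel n \<sigma> =
     (if \<sigma> < n*n
      then meas_prep n (\<lambda>r s. if r = s then complex_of_real (probe_weight n \<sigma>) else 0) (probe_vec n \<sigma>)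
      else (let T = probe_interpolant n (sign_pattern (set_decode (\<sigma> - n*n))) in
        (\<lambda>A. meas_prep n (\<lambda>r s. (if r = s then 1/2 else 0) + complex_of_real (qfa_eps n) * T r s) (unit_fun 0) A
          + meas_prep n (\<lambda>r s. (if r = s then 1/2 else 0) + complex_of_real (qfa_eps n) * (- T r s)) (unit_fun 1) A)))"

lemma cptp_qfa_channel:
  assumes n: "2 \<le> n"
  shows "cptp n (qfa_channel n \<sigma>)"
proof (cases "\<sigma> < n*n")
  case True
  then show ?thesis
    unfolding qfa_channel_def
    by (simp, intro cptp_prepare probe_vec_normalized) (simp_all add: probe_weight_def)
next
  case False
  define T where "T = probe_interpolant n (sign_pattern (set_decode (\<sigma> - n*n)))"
  have herm: "hermitian_on n T" unfolding T_def by (rule hermitian_probe_interpolant)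
  have bound: "cmod (T r s) \<le> 4" for r s
    unfolding T_def by (rule probe_interpolant_bound) (simp add: sign_pattern_def)
  have eps: "0 \<le> qfa_eps n" "2 * qfa_eps n * 4 * real n \<le> 1"
    unfolding qfa_eps_def using n by auto
  have "dual_psd n (\<lambda>r s. (if r = s then 1/2 else 0) + complex_of_real (qfa_eps n) * T r s)"
    by (rule dual_psd_half_id_perturbed[OF herm bound eps])
  moreover have "dual_psd n (\<lambda>r s. (if r = s then 1/2 else 0) + complex_of_real (qfa_eps n) * (- T r s))"
    by (rule dual_psd_half_id_perturbed[OF hermitian_on_uminus[OF herm] _ eps]) (simp add: bound)
  moreover have "qfa_channel n \<sigma> = (\<lambda>A.
      meas_prep n (\<lambda>r s. (if r = s then 1/2 else 0) + complex_of_real (qfa_eps n) * T r s) (unit_fun 0) A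
    + meas_prep n (\<lambda>r s. (if r = s then 1/2 else 0) + complex_of_real (qfa_eps n) * (- T r s)) (unit_fun 1) A)"
    unfolding qfa_channel_def T_def Let_def using False by simp
  ultimately show ?thesis
    using n by (auto intro!: cptp_two_outcome unit_fun_normalized)
qed

lemma qfa_prob_probe_test:
  assumes p: "p < n*n" and I: "finite I"
  shows "qfa_prob (ket0_proj n) (qfa_channel n) (ket0_proj n) [p, n*n + set_encode I]
    = 1/2 + qfa_eps n * sign_pattern I p"
proof -
  define c where "c = complex_of_real (probe_weight n p)"
  define w where "w = probe_vec n p"
  define T where "T = probe_interpolant n (sign_pattern I)"
  define K0 where "K0 = (\<lambda>r s. (if r = s then 1/2 else 0) + complex_of_real (qfa_eps n) * T r s)"
  define K1 where "K1 = (\<lambda>r s. (if r = s then 1/2 else 0) + complex_of_real (qfa_eps n) * (- T r s))"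
  have n: "0 < n" using p by (cases n) auto
  define Y where "Y = qfa_channel n p (ket0_proj n)"
  have "trace_prod n (entries (ket0_proj n)) (\<lambda>r s. if r = s then c else 0) = c"
    using mtrace_eq_trace_prod[OF ket0_proj_carrier, of n] density_op_ket0_proj[OF n]
    unfolding density_op_def trace_prod_diag by simp
  then have Y: "entries Y i j = c * w i * cnj (w j)" if "i < n" "j < n" for i j
    unfolding Y_def qfa_channel_def meas_prep_def c_def w_def using p that by simp
  define Z where "Z = qfa_channel n (n*n + set_encode I) Y"
  have Z: "Z = meas_prep n K0 (unit_fun 0) Y + meas_prep n K1 (unit_fun 1) Y"
    unfolding Z_def qfa_channel_def K0_def K1_def T_def Let_def using I by simp
  then have "Z $$ (0,0) = trace_prod n (entries Y) K0"
    using n by (simp add: meas_prep_def unit_fun_def)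
  also have "\<dots> = trace_prod n (\<lambda>i j. c * w i * cnj (w j)) K0"
    using Y by (rule trace_prod_cong)
  also have "\<dots> = c * quad_form n K0 w"
    by (rule trace_prod_rank_one)
  also have "\<dots> = 1/2 * (c * (\<Sum>r<n. w r * cnj (w r))) + complex_of_real (qfa_eps n) * (c * quad_form n T w)"
    unfolding K0_def quad_form_add quad_form_diag quad_form_scale by (simp add: algebra_simps)
  also have "\<dots> = 1/2 + complex_of_real (qfa_eps n * sign_pattern I p)"
    unfolding c_def w_def T_def probe_vec_normalized[OF p] probe_interpolant_expectation[OF p] by simp
  finally have "Z $$ (0,0) = complex_of_real (1/2 + qfa_eps n * sign_pattern I p)" by simp
  moreover have "Z \<in> carrier_mat n n" unfolding Z by (simp add: meas_prep_def)
  ultimately show ?thesis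
    unfolding qfa_prob_def using n by (simp add: mtrace_ket0_proj_mult Y_def Z_def)
qed

lemma qfa_accepts_probe_test:
  assumes p: "p < n*n" and I: "I \<subseteq> {..<n*n}"
  shows "[p, n*n + set_encode I] \<in> qfa_lang (qfa_alphabet n) (ket0_proj n) (qfa_channel n) (ket0_proj n) (1/2)
    \<longleftrightarrow> p \<in> I"
proof -
  have "finite I" using I finite_subset by blast
  moreover have "0 < qfa_eps n" unfolding qfa_eps_def using p by (cases n) auto
  ultimately show ?thesis
    unfolding qfa_lang_def qfa_alphabet_def using p I
    by (auto simp: qfa_prob_probe_test sign_pattern_def)
qed

lemma is_1gqfa_probe_automaton:
  "2 \<le> n \<Longrightarrow> is_1gqfa (qfa_alphabet n) n (ket0_proj n) (qfa_channel n) (ket0_proj n)"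
  unfolding is_1gqfa_def by (simp add: density_op_ket0_proj orth_projector_ket0_proj cptp_qfa_channel)

section \<open>States needed by a PFA\<close>

lemma row_times_mass:
  assumes pi: "prob_vec k \<pi>" and M: "row_stochastic k M"
  shows "(\<Sum>j<k. row_times \<pi> M $ j) = 1"
proof -
  have "\<pi> \<in> carrier_vec k" "M \<in> carrier_mat k k"
    using pi M unfolding prob_vec_def row_stochastic_def by auto
  then have "(\<Sum>j<k. row_times \<pi> M $ j) = (\<Sum>j<k. \<Sum>i<k. \<pi> $ i * M $$ (i,j))"
    by (intro sum.cong refl) (simp add: row_times_def)
  also have "\<dots> = (\<Sum>i<k. \<pi> $ i * (\<Sum>j<k. M $$ (i,j)))"
    by (subst sum.swap) (simp add: sum_distrib_left)
  also have "\<dots> = 1"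
    using pi M unfolding prob_vec_def row_stochastic_def by simp
  finally show ?thesis .
qed

lemma pfa_prob_two_letters:
  assumes P: "is_pfa \<Sigma> k \<pi> Ps Pend F" and a: "a \<in> \<Sigma>" and b: "b \<in> \<Sigma>"
  shows "pfa_prob \<pi> Ps Pend F [a, b]
    = (\<Sum>j<k. row_times \<pi> (Ps a) $ j * (\<Sum>i\<in>F. \<Sum>l<k. Ps b $$ (j,l) * Pend $$ (l,i)))"
proof -
  have "\<pi> \<in> carrier_vec k" and Pa: "Ps a \<in> carrier_mat k k" and Pb: "Ps b \<in> carrier_mat k k"
    and Pe: "Pend \<in> carrier_mat k k" and F: "F \<subseteq> {..<k}"
    using P a b unfolding is_pfa_def prob_vec_def row_stochastic_def by auto
  define x where "x = row_times \<pi> (Ps a)"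
  have dx: "dim_vec x = k" unfolding x_def row_times_def using Pa by simp
  have "pfa_prob \<pi> Ps Pend F [a, b] = (\<Sum>i\<in>F. row_times (row_times x (Ps b)) Pend $ i)"
    unfolding pfa_prob_def x_def by simp
  also have "\<dots> = (\<Sum>i\<in>F. \<Sum>l<k. \<Sum>j<k. x $ j * (Ps b $$ (j,l) * Pend $$ (l,i)))"
    using F Pb Pe dx
    by (intro sum.cong refl) (auto simp: row_times_def sum_distrib_right mult.assoc)
  also have "\<dots> = (\<Sum>i\<in>F. \<Sum>j<k. \<Sum>l<k. x $ j * (Ps b $$ (j,l) * Pend $$ (l,i)))"
    by (rule sum.cong[OF refl], rule sum.swap)
  also have "\<dots> = (\<Sum>j<k. \<Sum>i\<in>F. \<Sum>l<k. x $ j * (Ps b $$ (j,l) * Pend $$ (l,i)))"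
    by (rule sum.swap)
  finally show ?thesis unfolding x_def by (simp add: sum_distrib_left)
qed

lemma exists_affine_dependence:
  fixes x :: "nat \<Rightarrow> nat \<Rightarrow> real"
  assumes km: "k < m" and mass: "\<And>p. p < m \<Longrightarrow> (\<Sum>j<k. x p j) = 1"
  obtains v where "\<forall>j<k. (\<Sum>p<m. v p * x p j) = 0" "(\<Sum>p<m. v p) = 0" "\<exists>p<m. v p \<noteq> 0"
proof -
  define A where "A = mat\<^sub>r m m (\<lambda>j. if j = k then 0\<^sub>v m else vec m (\<lambda>p. if j < k then x p j else 0))"
  have A: "A \<in> carrier_mat m m" unfolding A_def by simp
  have "det A = 0" unfolding A_def by (rule det_row_0[OF km]) auto
  then obtain u where u: "u \<in> carrier_vec m" "u \<noteq> 0\<^sub>v m" "A *\<^sub>v u = 0\<^sub>v m"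
    using det_0_iff_vec_prod_zero[OF A] by blast
  have dep: "(\<Sum>p<m. u $ p * x p j) = 0" if j: "j < k" for j
  proof -
    have "0 = (A *\<^sub>v u) $ j" using u(3) j km by simp
    also have "\<dots> = (\<Sum>p<m. u $ p * x p j)"
      unfolding A_def using j km u(1) by (simp add: scalar_prod_def atLeast0LessThan mult.commute)
    finally show ?thesis by simp
  qed
  have "(\<Sum>p<m. u $ p) = (\<Sum>p<m. \<Sum>j<k. u $ p * x p j)"
    using mass by (intro sum.cong refl) (simp add: sum_distrib_left[symmetric])
  also have "\<dots> = 0" using dep by (subst sum.swap) simp
  finally have "(\<Sum>p<m. u $ p) = 0" .
  moreover have "\<exists>p<m. u $ p \<noteq> 0"
  proof (rule ccontr)
    assume "\<not> (\<exists>p<m. u $ p \<noteq> 0)"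
    then have "u = 0\<^sub>v m" using u(1) by (intro eq_vecI) auto
    then show False using u(2) by simp
  qed
  ultimately show ?thesis using that[of "\<lambda>p. u $ p"] dep by blast
qed

lemma cutpoint_cannot_split_dependence:
  fixes x :: "nat \<Rightarrow> nat \<Rightarrow> real" and v f z :: "nat \<Rightarrow> real"
  assumes dep: "\<forall>j<k. (\<Sum>p<m. v p * x p j) = 0" and sum0: "(\<Sum>p<m. v p) = 0"
    and nz: "\<exists>p<m. v p \<noteq> 0"
    and f: "\<forall>p<m. f p = (\<Sum>j<k. x p j * z j)"
  shows "\<not> (\<forall>p<m. \<mu> < f p \<longleftrightarrow> 0 < v p)"
proof
  assume sep: "\<forall>p<m. \<mu> < f p \<longleftrightarrow> 0 < v p"
  obtain p0 where p0: "p0 < m" "0 < v p0"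
  proof (rule ccontr)
    assume "\<not> thesis"
    then have "\<forall>p\<in>{..<m}. 0 \<le> - v p" using that by force
    then have "\<forall>p\<in>{..<m}. - v p = 0"
      using sum0 sum_nonneg_eq_0_iff[of "{..<m}" "\<lambda>p. - v p"] by (simp add: sum_negf)
    then show False using nz by auto
  qed
  have terms: "0 \<le> v p * (f p - \<mu>)" if "p \<in> {..<m}" for p
  proof (cases "0 < v p")
    case True
    moreover have "\<mu> < f p" using sep that True by auto
    ultimately show ?thesis by simp
  next
    case False
    then have "f p \<le> \<mu>" using sep that by auto
    then show ?thesis using False by (intro mult_nonpos_nonpos) auto
  qed
  have "(\<Sum>p<m. v p * (f p - \<mu>)) = (\<Sum>p<m. v p * f p) - \<mu> * (\<Sum>p<m. v p)"
    by (simp add: algebra_simps sum_subtractf sum_distrib_left)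
  also have "(\<Sum>p<m. v p * f p) = (\<Sum>p<m. \<Sum>j<k. z j * (v p * x p j))"
    using f by (intro sum.cong refl) (simp add: sum_distrib_left mult_ac)
  also have "\<dots> = (\<Sum>j<k. z j * (\<Sum>p<m. v p * x p j))"
    by (subst sum.swap) (simp add: sum_distrib_left)
  also have "\<dots> = 0" using dep by simp
  finally have "(\<Sum>p<m. v p * (f p - \<mu>)) = 0" using sum0 by simp
  moreover have "0 < (\<Sum>p<m. v p * (f p - \<mu>))"
    using p0 sep terms by (intro sum_pos2[of _ p0]) auto
  ultimately show False by simp
qed

lemma pfa_states_ge_shattered_letters:
  assumes P: "is_pfa \<Sigma> k \<pi> Ps Pend F"
    and letters: "{..<m} \<subseteq> \<Sigma>" and tests: "\<And>I. I \<subseteq> {..<m} \<Longrightarrow> b I \<in> \<Sigma>"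
    and shatter: "\<And>I p. I \<subseteq> {..<m} \<Longrightarrow> p < m \<Longrightarrow>
      [p, b I] \<in> pfa_lang \<Sigma> \<pi> Ps Pend F \<mu> \<longleftrightarrow> p \<in> I"
  shows "m \<le> k"
proof (rule ccontr)
  assume "\<not> m \<le> k"
  define x where "x p j = row_times \<pi> (Ps p) $ j" for p j
  have "(\<Sum>j<k. x p j) = 1" if "p < m" for p
    unfolding x_def using P letters that unfolding is_pfa_def by (intro row_times_mass) auto
  then obtain v where dep: "\<forall>j<k. (\<Sum>p<m. v p * x p j) = 0" "(\<Sum>p<m. v p) = 0" "\<exists>p<m. v p \<noteq> 0"
    using exists_affine_dependence[of k m x] \<open>\<not> m \<le> k\<close> by auto
  define I where "I = {p. p < m \<and> 0 < v p}"
  define z where "z j = (\<Sum>i\<in>F. \<Sum>l<k. Ps (b I) $$ (j,l) * Pend $$ (l,i))" for j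
  define f where "f p = pfa_prob \<pi> Ps Pend F [p, b I]" for p
  have I: "I \<subseteq> {..<m}" unfolding I_def by auto
  have "\<forall>p<m. f p = (\<Sum>j<k. x p j * z j)"
    unfolding f_def x_def z_def using pfa_prob_two_letters[OF P] letters tests[OF I] by auto
  then have "\<not> (\<forall>p<m. \<mu> < f p \<longleftrightarrow> 0 < v p)"
    by (rule cutpoint_cannot_split_dependence[OF dep])
  moreover have "\<forall>p<m. \<mu> < f p \<longleftrightarrow> 0 < v p"
    using shatter[OF I] letters tests[OF I] unfolding pfa_lang_def I_def f_def by auto
  ultimately show False by blast
qed

theorem theorem4p1:
  fixes n :: nat
  assumes "n \<ge> 2"
  shows "\<exists>(\<Sigma>::nat set) \<rho>0 Es Pacc.
           finite \<Sigma> \<and> is_1gqfa \<Sigma> n \<rho>0 Es Pacc \<and>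
           (\<forall>k \<pi> Ps Pend F.
              is_pfa \<Sigma> k \<pi> Ps Pend F \<longrightarrow>
              (\<exists>\<mu>::real. 0 \<le> \<mu> \<and> \<mu> < 1 \<and>
                 pfa_lang \<Sigma> \<pi> Ps Pend F \<mu> = qfa_lang \<Sigma> \<rho>0 Es Pacc (1/2)) \<longrightarrow>
              k \<ge> n\<^sup>2 - 1)"
proof -
  have "n*n \<le> k"
    if P: "is_pfa (qfa_alphabet n) k \<pi> Ps Pend F"
      and L: "pfa_lang (qfa_alphabet n) \<pi> Ps Pend F \<mu>
        = qfa_lang (qfa_alphabet n) (ket0_proj n) (qfa_channel n) (ket0_proj n) (1/2)"
    for k \<pi> Ps Pend F \<mu>
  proof (rule pfa_states_ge_shattered_letters[OF P, where b = "\<lambda>I. n*n + set_encode I" and \<mu> = \<mu>])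
    show "{..<n*n} \<subseteq> qfa_alphabet n" "\<And>I. I \<subseteq> {..<n*n} \<Longrightarrow> n*n + set_encode I \<in> qfa_alphabet n"
      unfolding qfa_alphabet_def by auto
    show "\<And>I p. I \<subseteq> {..<n*n} \<Longrightarrow> p < n*n \<Longrightarrow>
        [p, n*n + set_encode I] \<in> pfa_lang (qfa_alphabet n) \<pi> Ps Pend F \<mu> \<longleftrightarrow> p \<in> I"
      unfolding L by (rule qfa_accepts_probe_test)
  qed
  moreover have "finite (qfa_alphabet n)" unfolding qfa_alphabet_def by simp
  ultimately show ?thesis
    using is_1gqfa_probe_automaton[OF assms] unfolding power2_eq_square
    by (intro exI[of _ "qfa_alphabet n"] exI[of _ "ket0_proj n"] exI[of _ "qfa_channel n"]) fastforce
qed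

end
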